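(* If $\mathbb P(T(X)\ge 1-\alpha)>0$, then $\mathbb E[D^\mu(X)]>0$ for every $\mu\ge 0$.
   Context: Let $(X,Y)\sim P_{XY}$ on $\mathcal X\times\mathcal Y$, $\alpha\in(0,1)$, $\mathcal I$ a finite collection of subsets of $\mathcal Y$, $w:\mathcal I\to(0,B)$ a bounded positive weight. For $C\in\mathcal I$ let $p_C(x)=\mathbb P(Y\in C\mid X=x)$, $\ell_{x,C}(\mu)=w(C)p_C(x)+\mu(p_C(x)-(1-\alpha))$ for $\mu\ge0$, $\mathcal U_x(\mu)=\max_{C\in\mathcal I}\ell_{x,C}(\mu)$, $D^\mu(x)=\mathbb 1\{\mathcal U_x(\mu)\ge0\}$, and $T(x)=\max_{C\in\mathcal I}p_C(x)$. *)

theory Defs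
  imports "HOL-Probability.Probability"
begin

text \<open>The conditional law of Y given X = x is given by a Markov kernel K
(a regular conditional distribution); p_C(x) = P(Y \<in> C | X = x) = measure (K x) C.\<close>

definition pC :: "('x \<Rightarrow> 'y measure) \<Rightarrow> 'y set \<Rightarrow> 'x \<Rightarrow> real" where
  "pC K C x = measure (K x) C"

definition ell :: "('y set \<Rightarrow> real) \<Rightarrow> real \<Rightarrow> ('x \<Rightarrow> 'y measure) \<Rightarrow> 'x \<Rightarrow> 'y set \<Rightarrow> real \<Rightarrow> real" where
  "ell w \<alpha> K x C \<mu> = w C * pC K C x + \<mu> * (pC K C x - (1 - \<alpha>))"

definition U :: "'y set set \<Rightarrow> ('y set \<Rightarrow> real) \<Rightarrow> real \<Rightarrow> ('x \<Rightarrow> 'y measure) \<Rightarrow> 'x \<Rightarrow> real \<Rightarrow> real" where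
  "U I w \<alpha> K x \<mu> = Max ((\<lambda>C. ell w \<alpha> K x C \<mu>) ` I)"

definition D :: "'y set set \<Rightarrow> ('y set \<Rightarrow> real) \<Rightarrow> real \<Rightarrow> ('x \<Rightarrow> 'y measure) \<Rightarrow> real \<Rightarrow> 'x \<Rightarrow> real" where
  "D I w \<alpha> K \<mu> x = (if U I w \<alpha> K x \<mu> \<ge> 0 then 1 else 0)"

definition T :: "'y set set \<Rightarrow> ('x \<Rightarrow> 'y measure) \<Rightarrow> 'x \<Rightarrow> real" where
  "T I K x = Max ((\<lambda>C. pC K C x) ` I)"

end

theory Submission
  imports Defs
begin

text \<open>If some C attains T(x) \<ge> 1 - \<alpha>, both summands of ell at C are
nonnegative, so U(x) \<ge> 0 and D(x) = 1. Hence E[D(X)], the probability of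
U(X) \<ge> 0, is at least P(T(X) \<ge> 1 - \<alpha>) > 0.\<close>

lemma D_eq_indicator: "D I w \<alpha> K \<mu> x = indicator {x. 0 \<le> U I w \<alpha> K x \<mu>} x"
  by (simp add: D_def indicator_def)

lemma U_nonneg_if_T_ge:
  assumes "finite I" "I \<noteq> {}" "\<And>C. C \<in> I \<Longrightarrow> 0 \<le> w C" "0 \<le> \<mu>"
    and "1 - \<alpha> \<le> T I K x"
  shows "0 \<le> U I w \<alpha> K x \<mu>"
proof -
  have "T I K x \<in> (\<lambda>C. pC K C x) ` I"
    unfolding T_def using assms(1,2) by (intro Max_in) auto
  then obtain C where C: "C \<in> I" "T I K x = pC K C x" by auto
  have "0 \<le> ell w \<alpha> K x C \<mu>"
    unfolding ell_def using C assms(3-5)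
    by (intro add_nonneg_nonneg mult_nonneg_nonneg) (auto simp: pC_def)
  also have "\<dots> \<le> U I w \<alpha> K x \<mu>"
    unfolding U_def using assms(1) C(1) by (intro Max_ge) auto
  finally show ?thesis .
qed

lemma measurable_pC:
  assumes "K \<in> Mx \<rightarrow>\<^sub>M prob_algebra My" "C \<in> sets My"
  shows "pC K C \<in> borel_measurable Mx"
  unfolding pC_def using assms by measurable

lemma measurable_T:
  assumes "K \<in> Mx \<rightarrow>\<^sub>M prob_algebra My" "finite I" "I \<subseteq> sets My"
  shows "T I K \<in> borel_measurable Mx"
  unfolding T_def using assms measurable_pC[OF assms(1)] by (intro borel_measurable_Max) auto

lemma measurable_U:
  assumes "K \<in> Mx \<rightarrow>\<^sub>M prob_algebra My" "finite I" "I \<subseteq> sets My"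
  shows "(\<lambda>x. U I w \<alpha> K x \<mu>) \<in> borel_measurable Mx"
  unfolding U_def ell_def using assms measurable_pC[OF assms(1)]
  by (intro borel_measurable_Max) auto

theorem proposition5:
  fixes M :: "'w measure" and Mx :: "'x measure" and My :: "'y measure"
    and X :: "'w \<Rightarrow> 'x" and Y :: "'w \<Rightarrow> 'y"
    and K :: "'x \<Rightarrow> 'y measure"
    and I :: "'y set set" and w :: "'y set \<Rightarrow> real" and B \<alpha> :: real
  assumes "prob_space M"
    and X_rv: "X \<in> M \<rightarrow>\<^sub>M Mx" and Y_rv: "Y \<in> M \<rightarrow>\<^sub>M My"
    and K_kernel: "K \<in> Mx \<rightarrow>\<^sub>M prob_algebra My"
    and K_cond: "\<And>A C. A \<in> sets Mx \<Longrightarrow> C \<in> sets My \<Longrightarrow>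
        measure M {\<omega> \<in> space M. X \<omega> \<in> A \<and> Y \<omega> \<in> C}
          = (\<integral>x. indicator A x * measure (K x) C \<partial>(distr M Mx X))"
    and "\<alpha> \<in> {0<..<1}"
    and "finite I" and "I \<noteq> {}" and "I \<subseteq> sets My"
    and "\<And>C. C \<in> I \<Longrightarrow> 0 < w C \<and> w C < B"
    and "measure M {\<omega> \<in> space M. T I K (X \<omega>) \<ge> 1 - \<alpha>} > 0"
  shows "\<forall>\<mu>\<ge>0. (\<integral>\<omega>. D I w \<alpha> K \<mu> (X \<omega>) \<partial>M) > 0"
proof (intro allI impI)
  fix \<mu> :: real assume "0 \<le> \<mu>"
  interpret prob_space M by fact
  let ?S = "{\<omega> \<in> space M. 1 - \<alpha> \<le> T I K (X \<omega>)}"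
  let ?U = "{\<omega> \<in> space M. 0 \<le> U I w \<alpha> K (X \<omega>) \<mu>}"
  note [measurable] =
    X_rv measurable_T[OF K_kernel assms(7,9)] measurable_U[OF K_kernel assms(7,9)]
  have "?S \<subseteq> ?U"
    using U_nonneg_if_T_ge[OF assms(7,8), of w \<mu>] assms(10) \<open>0 \<le> \<mu>\<close>
    by (auto simp: less_imp_le)
  then have "measure M ?S \<le> measure M ?U"
    by (intro finite_measure_mono) measurable
  also have "\<dots> = (\<integral>\<omega>. indicator ?U \<omega> \<partial>M)"
    by (simp add: Int_absorb2)
  also have "\<dots> = (\<integral>\<omega>. D I w \<alpha> K \<mu> (X \<omega>) \<partial>M)"
    by (rule Bochner_Integration.integral_cong) (auto simp: D_eq_indicator indicator_def)
  finally show "(\<integral>\<omega>. D I w \<alpha> K \<mu> (X \<omega>) \<partial>M) > 0"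
    using assms(11) by linarith
qed

end
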